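(* Let $Z$ and $X$ be the third and first Pauli matrices on $\mathbb C^2$ and consider the assemblage, for $a,b,x,y\in\{0,1\}$, $$\sigma^{(\mathrm{GHZ})}_{a,b|x,y}=\frac18\left\{\mathbb 1+\frac{(-1)^b}{\sqrt2}\left[Z+x(-1)^{a+y}X\right]\right\}$$ (obtained from the state $(|000\rangle+|111\rangle)/\sqrt2$ when Bob measures in the eigenbasis of $Z+X$ for $y=0$ and of $Z-X$ for $y=1$, and Alice performs the trivial POVM $\{\mathbb 1/2,\mathbb 1/2\}$ for $x=0$ and an $X$-basis measurement for $x=1$). Then $\sigma^{(\mathrm{GHZ})}$ admits an LHS model across $AB|C$, and under the wiring $y=a$ it is mapped to the bipartite assemblage $$\sigma_{b|x}=\sum_a\sigma^{(\mathrm{GHZ})}_{a,b|x,a}=\frac14\left[\mathbb 1+\frac{(-1)^b}{\sqrt2}(Z+xX)\right],\qquad b,x\in\{0,1\},$$ which is both steerable and Bell nonlocal.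
   Context: A tripartite family $\{\sigma_{a,b|x,y}\}$ of positive semidefinite operators on $\mathbb C^2$ admits an LHS model across $AB|C$ if there exist a finite set of $\lambda$, probabilities $P_\lambda$, arbitrary conditional probability distributions $P_{a,b|x,y,\lambda}$ (not required to be non-signaling), and density operators $\varrho_\lambda$ with $\sigma_{a,b|x,y}=\sum_\lambda P_\lambda P_{a,b|x,y,\lambda}\varrho_\lambda$. A bipartite assemblage $\{\sigma_{b|x}\}$ is unsteerable if $\sigma_{b|x}=\sum_\lambda P_\lambda P_{b|x,\lambda}\varrho_\lambda$ for some finite hidden variable $\lambda$, probabilities $P_\lambda$, conditional distributions $P_{b|x,\lambda}$ and density operators $\varrho_\lambda$; otherwise it is steerable. It is Bell nonlocal if there exist POVMs $\{M_{c|z}\}_c$ on Charlie's system, for finitely many inputs $z$, such that the behavior $P(b,c|x,z)=\mathrm{Tr}[M_{c|z}\sigma_{b|x}]$ admits no local hidden-variable model $P(b,c|x,z)=\sum_\lambda P_\lambda P(b|x,\lambda)P(c|z,\lambda)$. *)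

theory Defs
  imports "HOL-Analysis.Analysis"
begin

type_synonym cmat = "complex ^ 2 ^ 2"

definition pauliZ :: cmat where
  "pauliZ = (\<chi> i j. if i = j then (if i = 0 then 1 else -1) else 0)"

definition pauliX :: cmat where
  "pauliX = (\<chi> i j. if i = j then 0 else 1)"

definition mtrace :: "cmat \<Rightarrow> complex" where
  "mtrace M = (\<Sum>i\<in>UNIV. M $ i $ i)"

definition qform :: "cmat \<Rightarrow> complex ^ 2 \<Rightarrow> complex" where
  "qform M v = (\<Sum>i\<in>UNIV. \<Sum>j\<in>UNIV. cnj (v $ i) * M $ i $ j * v $ j)"

definition psd :: "cmat \<Rightarrow> bool" where
  "psd M \<longleftrightarrow> (\<forall>v. Im (qform M v) = 0 \<and> Re (qform M v) \<ge> 0)"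

definition density :: "cmat \<Rightarrow> bool" where
  "density \<rho> \<longleftrightarrow> psd \<rho> \<and> mtrace \<rho> = 1"

definition bits :: "nat set" where
  "bits = {0, 1}"

definition sigmaGHZ :: "nat \<Rightarrow> nat \<Rightarrow> nat \<Rightarrow> nat \<Rightarrow> cmat" where
  "sigmaGHZ a b x y = (1/8) *\<^sub>R (mat 1 + ((-1) ^ b / sqrt 2) *\<^sub>R
      (pauliZ + (real x * (-1) ^ (a + y)) *\<^sub>R pauliX))"

definition sigmaBip :: "nat \<Rightarrow> nat \<Rightarrow> cmat" where
  "sigmaBip b x = (1/4) *\<^sub>R (mat 1 + ((-1) ^ b / sqrt 2) *\<^sub>R
      (pauliZ + real x *\<^sub>R pauliX))"

text \<open>LHS model across AB|C for a tripartite assemblage with a,b,x,y in {0,1};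
  hidden variables range over a finite set of naturals; P_{a,b|x,y,lambda} arbitrary
  (possibly signalling) conditional distributions.\<close>
definition lhs_AB_C :: "(nat \<Rightarrow> nat \<Rightarrow> nat \<Rightarrow> nat \<Rightarrow> cmat) \<Rightarrow> bool" where
  "lhs_AB_C \<sigma> \<longleftrightarrow>
    (\<exists>(\<Lambda>::nat set) (P::nat \<Rightarrow> real) (Pab::nat \<Rightarrow> nat \<Rightarrow> nat \<Rightarrow> nat \<Rightarrow> nat \<Rightarrow> real)
        (\<rho>::nat \<Rightarrow> cmat).
      finite \<Lambda> \<and>
      (\<forall>l\<in>\<Lambda>. P l \<ge> 0) \<and> sum P \<Lambda> = 1 \<and>
      (\<forall>l\<in>\<Lambda>. \<forall>x\<in>bits. \<forall>y\<in>bits.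
          (\<forall>a\<in>bits. \<forall>b\<in>bits. Pab a b x y l \<ge> 0) \<and>
          (\<Sum>a\<in>bits. \<Sum>b\<in>bits. Pab a b x y l) = 1) \<and>
      (\<forall>l\<in>\<Lambda>. density (\<rho> l)) \<and>
      (\<forall>a\<in>bits. \<forall>b\<in>bits. \<forall>x\<in>bits. \<forall>y\<in>bits.
          \<sigma> a b x y = (\<Sum>l\<in>\<Lambda>. (P l * Pab a b x y l) *\<^sub>R \<rho> l)))"

definition unsteerable :: "(nat \<Rightarrow> nat \<Rightarrow> cmat) \<Rightarrow> bool" where
  "unsteerable \<sigma> \<longleftrightarrow>
    (\<exists>(\<Lambda>::nat set) (P::nat \<Rightarrow> real) (Pb::nat \<Rightarrow> nat \<Rightarrow> nat \<Rightarrow> real) (\<rho>::nat \<Rightarrow> cmat).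
      finite \<Lambda> \<and>
      (\<forall>l\<in>\<Lambda>. P l \<ge> 0) \<and> sum P \<Lambda> = 1 \<and>
      (\<forall>l\<in>\<Lambda>. \<forall>x\<in>bits. (\<forall>b\<in>bits. Pb b x l \<ge> 0) \<and> (\<Sum>b\<in>bits. Pb b x l) = 1) \<and>
      (\<forall>l\<in>\<Lambda>. density (\<rho> l)) \<and>
      (\<forall>b\<in>bits. \<forall>x\<in>bits. \<sigma> b x = (\<Sum>l\<in>\<Lambda>. (P l * Pb b x l) *\<^sub>R \<rho> l)))"

definition steerable :: "(nat \<Rightarrow> nat \<Rightarrow> cmat) \<Rightarrow> bool" where
  "steerable \<sigma> \<longleftrightarrow> \<not> unsteerable \<sigma>"

definition povm_family :: "nat set \<Rightarrow> nat set \<Rightarrow> (nat \<Rightarrow> nat \<Rightarrow> cmat) \<Rightarrow> bool" where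
  "povm_family Zs Cs M \<longleftrightarrow>
    (\<forall>z\<in>Zs. (\<forall>c\<in>Cs. psd (M c z)) \<and> (\<Sum>c\<in>Cs. M c z) = mat 1)"

definition lhv_model :: "nat set \<Rightarrow> nat set \<Rightarrow> (nat \<Rightarrow> nat \<Rightarrow> nat \<Rightarrow> nat \<Rightarrow> complex) \<Rightarrow> bool" where
  "lhv_model Zs Cs Q \<longleftrightarrow>
    (\<exists>(\<Lambda>::nat set) (P::nat \<Rightarrow> real) (Pb::nat \<Rightarrow> nat \<Rightarrow> nat \<Rightarrow> real) (Pc::nat \<Rightarrow> nat \<Rightarrow> nat \<Rightarrow> real).
      finite \<Lambda> \<and>
      (\<forall>l\<in>\<Lambda>. P l \<ge> 0) \<and> sum P \<Lambda> = 1 \<and>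
      (\<forall>l\<in>\<Lambda>. \<forall>x\<in>bits. (\<forall>b\<in>bits. Pb b x l \<ge> 0) \<and> (\<Sum>b\<in>bits. Pb b x l) = 1) \<and>
      (\<forall>l\<in>\<Lambda>. \<forall>z\<in>Zs. (\<forall>c\<in>Cs. Pc c z l \<ge> 0) \<and> (\<Sum>c\<in>Cs. Pc c z l) = 1) \<and>
      (\<forall>b\<in>bits. \<forall>c\<in>Cs. \<forall>x\<in>bits. \<forall>z\<in>Zs.
          Q b c x z = complex_of_real (\<Sum>l\<in>\<Lambda>. P l * Pb b x l * Pc c z l)))"

definition bell_nonlocal :: "(nat \<Rightarrow> nat \<Rightarrow> cmat) \<Rightarrow> bool" where
  "bell_nonlocal \<sigma> \<longleftrightarrow>
    (\<exists>(Zs::nat set) (Cs::nat set) (M::nat \<Rightarrow> nat \<Rightarrow> cmat).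
      finite Zs \<and> finite Cs \<and> povm_family Zs Cs M \<and>
      \<not> lhv_model Zs Cs (\<lambda>b c x z. mtrace (M c z ** \<sigma> b x)))"

end

theory Submission
  imports Defs
begin

text \<open>
  In the LHS model across AB|C the hidden variable selects, uniformly, one of the four states
  that Alice and Bob steer Charlie's qubit to, with Bloch vectors (+-1, +-1)/sqrt 2 in the
  Z-X plane; since the response functions may signal, Alice's and Bob's outputs can be read
  off from it directly.
  The wiring y = a cancels the sign (-1)^(a+y), which is all that depends on a, leaving
  sigma_{b|x}. If Charlie measures Z and -X, the resulting behaviour has CHSH value
  3/sqrt 2 > 2, whereas every local model obeys CHSH <= 2. Steerability follows because an
  unsteerable assemblage gives a local model for every measurement of Charlie, with Charlie's
  response given by the Born rule Tr(M_{c|z} rho_lambda), which is a probability since the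
  trace of a product of two positive semidefinite 2x2 matrices is nonnegative.
\<close>

lemma cmat_eq_iff:
  "(M::cmat) = N \<longleftrightarrow> M$1$1 = N$1$1 \<and> M$1$2 = N$1$2 \<and> M$2$1 = N$2$1 \<and> M$2$2 = N$2$2"
  by (auto simp: vec_eq_iff forall_2)

lemma qform_2:
  "qform M v = cnj (v$1) * M$1$1 * v$1 + cnj (v$1) * M$1$2 * v$2
             + cnj (v$2) * M$2$1 * v$1 + cnj (v$2) * M$2$2 * v$2"
  by (simp add: qform_def sum_2)

lemma mtrace_mult_2:
  fixes A B :: cmat
  shows "mtrace (A ** B) = A$1$1 * B$1$1 + A$1$2 * B$2$1 + A$2$1 * B$1$2 + A$2$2 * B$2$2"
  by (simp add: mtrace_def matrix_matrix_mult_def sum_2)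

lemma two_mult_le_of_sq_le:
  fixes u w p q r s :: real
  assumes "0 \<le> p" "0 \<le> q" "0 \<le> r" "0 \<le> s" "u\<^sup>2 \<le> p * q" "w\<^sup>2 \<le> r * s"
  shows "2 * u * w \<le> p * r + q * s"
proof (rule power2_le_imp_le)
  have "(2 * u * w)\<^sup>2 \<le> 4 * (p * q) * (r * s)"
    using mult_mono[OF assms(5,6)] assms(1-4) by (simp add: power_mult_distrib)
  also have "\<dots> \<le> (p * r + q * s)\<^sup>2"
    using zero_le_power2[of "p * r - q * s"] by (simp add: power2_eq_square algebra_simps)
  finally show "(2 * u * w)\<^sup>2 \<le> (p * r + q * s)\<^sup>2" .
  show "0 \<le> p * r + q * s"
    using assms(1-4) by simp
qed

lemma sq_le_mult_of_quadratic_nonneg: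
  fixes a b c :: real
  assumes "0 \<le> a" and nonneg: "\<And>t. 0 \<le> a * t\<^sup>2 - 2 * b * t + c"
  shows "b\<^sup>2 \<le> a * c"
proof (cases "a = 0")
  case True
  have "b = 0"
  proof (rule ccontr)
    assume "b \<noteq> 0"
    then show False
      using nonneg[of "(c + 1) / (2 * b)"] True by simp
  qed
  with True show ?thesis by simp
next
  case False
  with assms(1) have "0 < a" by simp
  have "0 \<le> a * (b / a)\<^sup>2 - 2 * b * (b / a) + c" by (rule nonneg)
  also have "\<dots> = (a * c - b\<^sup>2) / a"
    using \<open>0 < a\<close> by (simp add: field_simps power2_eq_square)
  finally show ?thesis
    using \<open>0 < a\<close> by (simp add: zero_le_divide_iff)
qed

lemma of_real_add_cnj_nonneg:
  assumes "2 * cmod w \<le> a"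
  shows "Im (of_real a + (w + cnj w)) = 0 \<and> 0 \<le> Re (of_real a + (w + cnj w))"
  using assms abs_Re_le_cmod[of w] by simp

lemma psd_iff_entries:
  "psd M \<longleftrightarrow> M$2$1 = cnj (M$1$2) \<and> Im (M$1$1) = 0 \<and> Im (M$2$2) = 0 \<and>
     0 \<le> Re (M$1$1) \<and> 0 \<le> Re (M$2$2) \<and> (cmod (M$1$2))\<^sup>2 \<le> Re (M$1$1) * Re (M$2$2)"
  (is "_ \<longleftrightarrow> ?herm \<and> ?im1 \<and> ?im2 \<and> ?re1 \<and> ?re2 \<and> ?cs")
proof
  assume "psd M"
  then have im: "Im (qform M v) = 0" and re: "0 \<le> Re (qform M v)" for v
    unfolding psd_def by auto
  from im[of "vector [1, 0]"] re[of "vector [1, 0]"] have ?im1 ?re1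
    by (simp_all add: qform_2)
  from im[of "vector [0, 1]"] re[of "vector [0, 1]"] have ?im2 ?re2
    by (simp_all add: qform_2)
  from im[of "vector [1, 1]"] im[of "vector [1, \<i>]"] \<open>?im1\<close> \<open>?im2\<close> have ?herm
    by (simp add: qform_2 complex_eq_iff)
  have ?cs
  proof (cases "M$1$2 = 0")
    case False
    let ?k = "(Re (M$1$2))\<^sup>2 + (Im (M$1$2))\<^sup>2"
    \<comment> \<open>the form on the vectors (t, -M21) is a quadratic in t; its discriminant is the bound\<close>
    have "0 \<le> Re (M$1$1) * t\<^sup>2 - 2 * ?k * t + Re (M$2$2) * ?k" for t
      using re[of "vector [of_real t, - M$2$1]"] \<open>?herm\<close> \<open>?im1\<close> \<open>?im2\<close>
      by (simp add: qform_2 cmod_power2 power2_eq_square algebra_simps)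
    then have "?k\<^sup>2 \<le> Re (M$1$1) * (Re (M$2$2) * ?k)"
      using \<open>?re1\<close> by (intro sq_le_mult_of_quadratic_nonneg) (simp add: algebra_simps)
    moreover have "0 < ?k"
      using False by (simp add: complex_eq_iff sum_power2_gt_zero_iff)
    ultimately have "?k \<le> Re (M$1$1) * Re (M$2$2)"
      by (simp add: power2_eq_square mult.assoc[symmetric])
    then show ?cs by (simp add: cmod_power2)
  qed (use \<open>?re1\<close> \<open>?re2\<close> in simp)
  show "?herm \<and> ?im1 \<and> ?im2 \<and> ?re1 \<and> ?re2 \<and> ?cs"
    by (intro conjI) fact+
next
  assume "?herm \<and> ?im1 \<and> ?im2 \<and> ?re1 \<and> ?re2 \<and> ?cs"
  then have ?herm ?im1 ?im2 ?re1 ?re2 ?cs by blast+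
  show "psd M" unfolding psd_def
  proof
    fix v :: "complex ^ 2"
    let ?w = "cnj (v$1) * M$1$2 * v$2"
    let ?d = "Re (M$1$1) * (cmod (v$1))\<^sup>2 + Re (M$2$2) * (cmod (v$2))\<^sup>2"
    have "qform M v = of_real ?d + (?w + cnj ?w)"
      using \<open>?herm\<close> \<open>?im1\<close> \<open>?im2\<close> unfolding cmod_power2
      by (simp add: qform_2 complex_eq_iff power2_eq_square algebra_simps)
    moreover have "2 * cmod ?w \<le> ?d"
      using two_mult_le_of_sq_le[of _ _ _ _ "cmod (M$1$2)" "cmod (v$1) * cmod (v$2)"]
        \<open>?re1\<close> \<open>?re2\<close> \<open>?cs\<close>
      by (simp add: norm_mult power_mult_distrib mult_ac)
    ultimately show "Im (qform M v) = 0 \<and> 0 \<le> Re (qform M v)"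
      using of_real_add_cnj_nonneg by presburger
  qed
qed

lemma mtrace_mult_psd_nonneg:
  assumes "psd M" "psd R"
  shows "Im (mtrace (M ** R)) = 0 \<and> 0 \<le> Re (mtrace (M ** R))"
proof -
  let ?w = "M$1$2 * R$2$1"
  let ?d = "Re (M$1$1) * Re (R$1$1) + Re (M$2$2) * Re (R$2$2)"
  have M: "M$2$1 = cnj (M$1$2)" "Im (M$1$1) = 0" "Im (M$2$2) = 0"
      "0 \<le> Re (M$1$1)" "0 \<le> Re (M$2$2)" "(cmod (M$1$2))\<^sup>2 \<le> Re (M$1$1) * Re (M$2$2)"
    using assms(1) unfolding psd_iff_entries by auto
  have R: "R$1$2 = cnj (R$2$1)" "Im (R$1$1) = 0" "Im (R$2$2) = 0"
      "0 \<le> Re (R$1$1)" "0 \<le> Re (R$2$2)" "(cmod (R$2$1))\<^sup>2 \<le> Re (R$1$1) * Re (R$2$2)"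
    using assms(2) unfolding psd_iff_entries by auto
  have "mtrace (M ** R) = of_real ?d + (?w + cnj ?w)"
    using M R by (simp add: mtrace_mult_2 complex_eq_iff algebra_simps)
  moreover have "2 * cmod ?w \<le> ?d"
    using two_mult_le_of_sq_le[of _ _ _ _ "cmod (M$1$2)" "cmod (R$2$1)"] M R
    by (simp add: norm_mult mult_ac)
  ultimately show ?thesis
    using of_real_add_cnj_nonneg by presburger
qed

lemma mtrace_mult_sum_left:
  fixes M :: "nat \<Rightarrow> cmat"
  shows "mtrace ((\<Sum>c\<in>C. M c) ** R) = (\<Sum>c\<in>C. mtrace (M c ** R))"
  by (simp add: mtrace_mult_2 sum_component sum.distrib sum_distrib_right)

lemma mtrace_mult_sum_scaleR_right:
  fixes R :: "nat \<Rightarrow> cmat"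
  shows "mtrace (M ** (\<Sum>l\<in>L. w l *\<^sub>R R l)) = (\<Sum>l\<in>L. w l *\<^sub>R mtrace (M ** R l))"
  unfolding mtrace_mult_2 sum_component vector_scaleR_component
  by (simp add: sum.distrib sum_distrib_left scaleR_conv_of_real algebra_simps)

lemma unsteerable_imp_lhv_model:
  assumes "unsteerable \<sigma>" and povm: "povm_family Zs Cs M"
  shows "lhv_model Zs Cs (\<lambda>b c x z. mtrace (M c z ** \<sigma> b x))"
  using assms(1) unfolding unsteerable_def
proof (elim exE conjE)
  fix \<Lambda> :: "nat set" and P :: "nat \<Rightarrow> real" and Pb :: "nat \<Rightarrow> nat \<Rightarrow> nat \<Rightarrow> real"
    and \<rho> :: "nat \<Rightarrow> cmat"
  assume fin: "finite \<Lambda>" and P: "\<forall>l\<in>\<Lambda>. P l \<ge> 0" "sum P \<Lambda> = 1"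
    and Pb: "\<forall>l\<in>\<Lambda>. \<forall>x\<in>bits. (\<forall>b\<in>bits. Pb b x l \<ge> 0) \<and> (\<Sum>b\<in>bits. Pb b x l) = 1"
    and \<rho>: "\<forall>l\<in>\<Lambda>. density (\<rho> l)"
    and \<sigma>: "\<forall>b\<in>bits. \<forall>x\<in>bits. \<sigma> b x = (\<Sum>l\<in>\<Lambda>. (P l * Pb b x l) *\<^sub>R \<rho> l)"
  define Pc where "Pc c z l = Re (mtrace (M c z ** \<rho> l))" for c z l
  have born: "mtrace (M c z ** \<rho> l) = of_real (Pc c z l) \<and> 0 \<le> Pc c z l"
    if "l \<in> \<Lambda>" "z \<in> Zs" "c \<in> Cs" for c z l
  proof -
    have "psd (M c z)" using povm that unfolding povm_family_def by blast
    moreover have "psd (\<rho> l)" using \<rho> that unfolding density_def by blast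
    ultimately show ?thesis
      using mtrace_mult_psd_nonneg unfolding Pc_def by (simp add: complex_eq_iff)
  qed
  have Pc_sum: "(\<Sum>c\<in>Cs. Pc c z l) = 1" if "l \<in> \<Lambda>" "z \<in> Zs" for z l
  proof -
    have "(\<Sum>c\<in>Cs. Pc c z l) = Re (mtrace ((\<Sum>c\<in>Cs. M c z) ** \<rho> l))"
      by (simp add: Pc_def mtrace_mult_sum_left Re_sum)
    also have "\<dots> = 1"
      using povm \<rho> that by (simp add: povm_family_def density_def)
    finally show ?thesis .
  qed
  have Pc: "\<forall>l\<in>\<Lambda>. \<forall>z\<in>Zs. (\<forall>c\<in>Cs. 0 \<le> Pc c z l) \<and> (\<Sum>c\<in>Cs. Pc c z l) = 1"
    using born Pc_sum by blast
  have Q: "\<forall>b\<in>bits. \<forall>c\<in>Cs. \<forall>x\<in>bits. \<forall>z\<in>Zs.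
      mtrace (M c z ** \<sigma> b x) = complex_of_real (\<Sum>l\<in>\<Lambda>. P l * Pb b x l * Pc c z l)"
  proof (intro ballI)
    fix b c x z assume ranges: "b \<in> bits" "c \<in> Cs" "x \<in> bits" "z \<in> Zs"
    have "mtrace (M c z ** \<sigma> b x) = (\<Sum>l\<in>\<Lambda>. (P l * Pb b x l) *\<^sub>R mtrace (M c z ** \<rho> l))"
      unfolding \<sigma>[rule_format, OF ranges(1,3)] by (rule mtrace_mult_sum_scaleR_right)
    also have "\<dots> = (\<Sum>l\<in>\<Lambda>. (P l * Pb b x l) *\<^sub>R complex_of_real (Pc c z l))"
      using born ranges by (intro sum.cong) simp_all
    finally show "mtrace (M c z ** \<sigma> b x) = complex_of_real (\<Sum>l\<in>\<Lambda>. P l * Pb b x l * Pc c z l)"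
      by (simp add: scaleR_conv_of_real)
  qed
  show ?thesis
    unfolding lhv_model_def using fin P Pb Pc Q
    by (intro exI[of _ \<Lambda>] exI[of _ P] exI[of _ Pb] exI[of _ Pc] conjI) assumption+
qed

lemma bell_nonlocal_imp_steerable: "bell_nonlocal \<sigma> \<Longrightarrow> steerable \<sigma>"
  unfolding bell_nonlocal_def steerable_def using unsteerable_imp_lhv_model by blast

definition bloch_zx :: "real \<Rightarrow> real \<Rightarrow> cmat" where
  "bloch_zx s t = (1/2) *\<^sub>R (mat 1 + s *\<^sub>R pauliZ + t *\<^sub>R pauliX)"

lemma bloch_zx_entries [simp]:
  "bloch_zx s t $ 1 $ 1 = of_real ((1 - s) / 2)"
  "bloch_zx s t $ 2 $ 2 = of_real ((1 + s) / 2)"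
  "bloch_zx s t $ 1 $ 2 = of_real (t / 2)"
  "bloch_zx s t $ 2 $ 1 = of_real (t / 2)"
  by (simp_all add: bloch_zx_def pauliZ_def pauliX_def mat_def)
    (simp_all add: scaleR_conv_of_real field_simps)

lemma density_bloch_zx:
  assumes "s\<^sup>2 + t\<^sup>2 \<le> 1"
  shows "density (bloch_zx s t)"
proof -
  have "s\<^sup>2 \<le> 1"
    using assms zero_le_power2[of t] by linarith
  then have "\<bar>s\<bar> \<le> 1"
    by (simp add: abs_square_le_1)
  moreover have "t\<^sup>2 \<le> (1 - s) * (1 + s)"
    using assms by (simp add: algebra_simps power2_eq_square)
  ultimately show ?thesis
    by (simp add: density_def psd_iff_entries mtrace_def sum_2 power_divide abs_le_iff
        add_divide_distrib[symmetric])
qed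

lemma Re_mtrace_bloch_zx_mult:
  "Re (mtrace (bloch_zx s t ** (r *\<^sub>R bloch_zx s' t'))) = r * (1 + s * s' + t * t') / 2"
  by (simp add: mtrace_mult_2 field_simps)

lemma sigmaGHZ_eq_bloch_zx:
  "sigmaGHZ a b x y =
    (1/4) *\<^sub>R bloch_zx ((-1)^b / sqrt 2) ((-1)^b * real x * (-1)^(a + y) / sqrt 2)"
  unfolding sigmaGHZ_def bloch_zx_def by (simp add: scaleR_add_right)

lemma sigmaBip_eq_bloch_zx:
  "sigmaBip b x = (1/2) *\<^sub>R bloch_zx ((-1)^b / sqrt 2) ((-1)^b * real x / sqrt 2)"
  unfolding sigmaBip_def bloch_zx_def by (simp add: scaleR_add_right)

lemma sum_sigmaGHZ_wired: "(\<Sum>a\<in>bits. sigmaGHZ a b x a) = sigmaBip b x"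
proof -
  have "sigmaGHZ a b x a = (1/2) *\<^sub>R sigmaBip b x" for a
    by (simp add: sigmaGHZ_eq_bloch_zx sigmaBip_eq_bloch_zx power_add[symmetric])
  then show ?thesis by (simp add: bits_def)
qed

text \<open>
  The hidden variable l = b + 2k fixes Bob's outcome b and the sign (-1)^k of the X-component
  of Charlie's state.
\<close>

definition lhs_state :: "nat \<Rightarrow> cmat" where
  "lhs_state l = bloch_zx ((-1)^(l mod 2) / sqrt 2) ((-1)^(l div 2) / sqrt 2)"

definition lhs_response :: "nat \<Rightarrow> nat \<Rightarrow> nat \<Rightarrow> nat \<Rightarrow> nat \<Rightarrow> real" where
  "lhs_response a b x y l =
     (if x = 0 then (if b = l mod 2 then 1/2 else 0)
      else (if l = b + 2 * ((a + b + y) mod 2) then 1 else 0))"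

lemma density_lhs_state: "density (lhs_state l)"
  unfolding lhs_state_def
  by (rule density_bloch_zx) (simp add: power_divide power_mult[symmetric])

lemma sigmaGHZ_lhs_decomposition:
  assumes "a \<in> bits" "b \<in> bits" "x \<in> bits" "y \<in> bits"
  shows "sigmaGHZ a b x y = (\<Sum>l\<in>{0,1,2,3}. (1/4 * lhs_response a b x y l) *\<^sub>R lhs_state l)"
  using assms unfolding bits_def cmat_eq_iff sigmaGHZ_eq_bloch_zx
  apply (simp only: sum_component vector_scaleR_component lhs_state_def bloch_zx_entries)
  apply (simp only: scaleR_conv_of_real of_real_mult[symmetric] of_real_sum[symmetric]
      of_real_eq_iff)
  apply (auto simp add: lhs_response_def field_simps)
  done

lemma lhs_AB_C_sigmaGHZ: "lhs_AB_C sigmaGHZ"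
  unfolding lhs_AB_C_def
proof (intro exI[of _ "{0,1,2,3}"] exI[of _ "\<lambda>_. 1/4"] exI[of _ lhs_response]
    exI[of _ lhs_state] conjI)
  show "\<forall>l\<in>{0,1,2,3}. \<forall>x\<in>bits. \<forall>y\<in>bits.
      (\<forall>a\<in>bits. \<forall>b\<in>bits. 0 \<le> lhs_response a b x y l) \<and>
      (\<Sum>a\<in>bits. \<Sum>b\<in>bits. lhs_response a b x y l) = 1"
    by (auto simp: bits_def lhs_response_def)
qed (simp_all add: density_lhs_state sigmaGHZ_lhs_decomposition)

definition correlator :: "(nat \<Rightarrow> nat \<Rightarrow> nat \<Rightarrow> nat \<Rightarrow> real) \<Rightarrow> nat \<Rightarrow> nat \<Rightarrow> real" where
  "correlator p x z = (\<Sum>b\<in>bits. \<Sum>c\<in>bits. (-1)^(b + c) * p b c x z)"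

definition chsh :: "(nat \<Rightarrow> nat \<Rightarrow> nat \<Rightarrow> nat \<Rightarrow> real) \<Rightarrow> real" where
  "chsh p = correlator p 0 0 + correlator p 0 1 + correlator p 1 0 - correlator p 1 1"

lemma correlator_eq: "correlator p x z = p 0 0 x z - p 0 1 x z - p 1 0 x z + p 1 1 x z"
  by (simp add: correlator_def bits_def)

lemma mult_le_abs_of_abs_le_one:
  fixes t u :: real
  assumes "\<bar>t\<bar> \<le> 1"
  shows "t * u \<le> \<bar>u\<bar>"
proof -
  have "t * u \<le> \<bar>t\<bar> * \<bar>u\<bar>" by (simp add: abs_mult[symmetric])
  also have "\<dots> \<le> \<bar>u\<bar>" using assms by (simp add: mult_left_le_one_le)
  finally show ?thesis .
qed

lemma chsh_deterministic_le:
  fixes a0 a1 b0 b1 :: real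
  assumes "\<bar>a0\<bar> \<le> 1" "\<bar>a1\<bar> \<le> 1" "\<bar>b0\<bar> \<le> 1" "\<bar>b1\<bar> \<le> 1"
  shows "a0 * b0 + a0 * b1 + a1 * b0 - a1 * b1 \<le> 2"
proof -
  have "a0 * (b0 + b1) \<le> \<bar>b0 + b1\<bar>" "a1 * (b0 - b1) \<le> \<bar>b0 - b1\<bar>"
    using assms(1,2) by (simp_all add: mult_le_abs_of_abs_le_one)
  moreover have "\<bar>b0 + b1\<bar> + \<bar>b0 - b1\<bar> \<le> 2"
    using assms(3,4) by linarith
  ultimately show ?thesis by (simp add: algebra_simps)
qed

lemma chsh_le_two_of_lhv_model:
  assumes "lhv_model bits bits Q"
  shows "chsh (\<lambda>b c x z. Re (Q b c x z)) \<le> 2"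
  using assms unfolding lhv_model_def
proof (elim exE conjE)
  fix \<Lambda> :: "nat set" and P :: "nat \<Rightarrow> real" and Pb Pc :: "nat \<Rightarrow> nat \<Rightarrow> nat \<Rightarrow> real"
  assume P: "\<forall>l\<in>\<Lambda>. P l \<ge> 0" "sum P \<Lambda> = 1"
    and Pb: "\<forall>l\<in>\<Lambda>. \<forall>x\<in>bits. (\<forall>b\<in>bits. Pb b x l \<ge> 0) \<and> (\<Sum>b\<in>bits. Pb b x l) = 1"
    and Pc: "\<forall>l\<in>\<Lambda>. \<forall>z\<in>bits. (\<forall>c\<in>bits. Pc c z l \<ge> 0) \<and> (\<Sum>c\<in>bits. Pc c z l) = 1"
    and Q: "\<forall>b\<in>bits. \<forall>c\<in>bits. \<forall>x\<in>bits. \<forall>z\<in>bits.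
      Q b c x z = complex_of_real (\<Sum>l\<in>\<Lambda>. P l * Pb b x l * Pc c z l)"
  define A where "A x l = Pb 0 x l - Pb 1 x l" for x l
  define B where "B z l = Pc 0 z l - Pc 1 z l" for z l
  have Re_Q: "Re (Q b c x z) = (\<Sum>l\<in>\<Lambda>. P l * Pb b x l * Pc c z l)"
    if "b \<in> bits" "c \<in> bits" "x \<in> bits" "z \<in> bits" for b c x z
    using Q that by simp
  have correlator_Q: "correlator (\<lambda>b c x z. Re (Q b c x z)) x z = (\<Sum>l\<in>\<Lambda>. P l * (A x l * B z l))"
    if "x \<in> bits" "z \<in> bits" for x z
    using that unfolding correlator_eq A_def B_def
    by (simp add: Re_Q bits_def sum.distrib[symmetric] sum_subtractf[symmetric] algebra_simps)
  have "chsh (\<lambda>b c x z. Re (Q b c x z))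
      = (\<Sum>l\<in>\<Lambda>. P l * (A 0 l * B 0 l + A 0 l * B 1 l + A 1 l * B 0 l - A 1 l * B 1 l))"
    by (simp add: chsh_def correlator_Q bits_def sum.distrib sum_subtractf algebra_simps)
  also have "\<dots> \<le> (\<Sum>l\<in>\<Lambda>. P l * 2)"
  proof (rule sum_mono)
    fix l assume "l \<in> \<Lambda>"
    then have "\<bar>A x l\<bar> \<le> 1" "\<bar>B x l\<bar> \<le> 1" if "x \<in> bits" for x
      using Pb Pc that unfolding A_def B_def bits_def by auto
    then show "P l * (A 0 l * B 0 l + A 0 l * B 1 l + A 1 l * B 0 l - A 1 l * B 1 l) \<le> P l * 2"
      using P(1) \<open>l \<in> \<Lambda>\<close> by (intro mult_left_mono chsh_deterministic_le) (auto simp: bits_def)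
  qed
  also have "\<dots> = 2"
    using P(2) by (simp add: sum_distrib_right[symmetric])
  finally show ?thesis .
qed

definition charlie_povm :: "nat \<Rightarrow> nat \<Rightarrow> cmat" where
  "charlie_povm c z = (if z = 0 then bloch_zx ((-1)^c) 0 else bloch_zx 0 ((-1)^(c + 1)))"

lemma povm_family_charlie_povm: "povm_family bits bits charlie_povm"
  unfolding povm_family_def
proof (intro ballI conjI)
  fix z c :: nat
  show "psd (charlie_povm c z)"
    using density_bloch_zx[of "(-1)^c" 0] density_bloch_zx[of 0 "(-1)^(c + 1)"]
    by (simp add: charlie_povm_def density_def power_mult[symmetric])
  show "(\<Sum>c\<in>bits. charlie_povm c z) = mat 1"
    by (simp add: cmat_eq_iff bits_def sum_component charlie_povm_def mat_def)
qed

lemma chsh_sigmaBip: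
  "chsh (\<lambda>b c x z. Re (mtrace (charlie_povm c z ** sigmaBip b x))) = 3 / sqrt 2"
  by (simp add: chsh_def correlator_def bits_def charlie_povm_def sigmaBip_eq_bloch_zx
      Re_mtrace_bloch_zx_mult field_simps)

lemma two_less_three_div_sqrt2: "2 < 3 / sqrt 2"
proof -
  have "sqrt 2 < 3 / 2"
    by (rule real_less_lsqrt) (simp_all add: power2_eq_square)
  then show ?thesis by (simp add: less_divide_eq)
qed

lemma bell_nonlocal_sigmaBip: "bell_nonlocal sigmaBip"
  unfolding bell_nonlocal_def
proof (intro exI[of _ bits] exI[of _ charlie_povm] conjI notI)
  assume "lhv_model bits bits (\<lambda>b c x z. mtrace (charlie_povm c z ** sigmaBip b x))"
  then have "chsh (\<lambda>b c x z. Re (mtrace (charlie_povm c z ** sigmaBip b x))) \<le> 2"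
    by (rule chsh_le_two_of_lhv_model)
  then show False
    using chsh_sigmaBip two_less_three_div_sqrt2 by simp
qed (use povm_family_charlie_povm in \<open>simp_all add: bits_def\<close>)

theorem theorem2:
  shows "lhs_AB_C sigmaGHZ
    \<and> (\<forall>b\<in>bits. \<forall>x\<in>bits. (\<Sum>a\<in>bits. sigmaGHZ a b x a) = sigmaBip b x)
    \<and> steerable sigmaBip
    \<and> bell_nonlocal sigmaBip"
  using lhs_AB_C_sigmaGHZ sum_sigmaGHZ_wired bell_nonlocal_sigmaBip
    bell_nonlocal_imp_steerable by blast

end
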